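(* Let $\delta\in(0,1)$, let $U$ be a unitary operator on a Hilbert space $\mathcal{M}$ and suppose $U^*=\int_{\mathbb{T}}\omega\,dE(\omega)$ for some $\mathcal{B}(\mathcal{M})$-valued spectral measure $E$ on $\mathbb{T}$. Then for all $\lambda,\mu\in G_\delta$, $$1-\mu_U^*\lambda_U=\int_{\mathbb{T}}\big(1-\overline{\Psi_\omega(\mu)}\Psi_\omega(\lambda)\big)\,dE(\omega).$$
   Context: $G_\delta=\{x+iy: x,y\in\mathbb{R},\ \frac{x^2}{(1+\delta)^2}+\frac{y^2}{(1-\delta)^2}<1\}$. For $\lambda\in G_\delta$, $\lambda_U=(\delta U^*-\tfrac12\lambda)(1-\tfrac12\lambda U^* )^{-1}$. For $\omega\in\mathbb{T}$, $\Psi_\omega(\lambda)=\frac{2\omega\delta-\lambda}{2-\omega\lambda}$. *)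

theory Defs
  imports "HOL-Analysis.Analysis"
begin

class chilbert = banach +
  fixes cscale :: "complex \<Rightarrow> 'a \<Rightarrow> 'a"
    and cinner :: "'a \<Rightarrow> 'a \<Rightarrow> complex"
  assumes cscale_add_right: "cscale a (x + y) = cscale a x + cscale a y"
    and cscale_add_left: "cscale (a + b) x = cscale a x + cscale b x"
    and cscale_cscale: "cscale a (cscale b x) = cscale (a * b) x"
    and cscale_one: "cscale 1 x = x"
    and cscale_of_real: "cscale (complex_of_real r) x = scaleR r x"
    and cinner_commute: "cinner x y = cnj (cinner y x)"
    and cinner_add_left: "cinner (x + y) z = cinner x z + cinner y z"
    and cinner_cscale_left: "cinner (cscale c x) y = c * cinner x y"
    and cinner_self_norm: "cinner x x = complex_of_real ((norm x)\<^sup>2)"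

definition clinear_op :: "('a::chilbert \<Rightarrow> 'a) \<Rightarrow> bool" where
  "clinear_op A \<longleftrightarrow> (\<forall>x y. A (x + y) = A x + A y) \<and> (\<forall>c x. A (cscale c x) = cscale c (A x))"

definition bounded_op :: "('a::chilbert \<Rightarrow> 'a) \<Rightarrow> bool" where
  "bounded_op A \<longleftrightarrow> clinear_op A \<and> (\<exists>K. \<forall>x. norm (A x) \<le> norm x * K)"

definition is_adjoint :: "('a::chilbert \<Rightarrow> 'a) \<Rightarrow> ('a \<Rightarrow> 'a) \<Rightarrow> bool" where
  "is_adjoint A B \<longleftrightarrow> (\<forall>x y. cinner (A x) y = cinner x (B y))"

text \<open>The Hilbert space adjoint \<open>A\<^sup>*\<close> (unique when it exists; it exists for bounded \<open>A\<close>).\<close>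
definition adj :: "('a::chilbert \<Rightarrow> 'a) \<Rightarrow> ('a \<Rightarrow> 'a)" where
  "adj A = (THE B. is_adjoint A B)"

definition opinv :: "('a::chilbert \<Rightarrow> 'a) \<Rightarrow> ('a \<Rightarrow> 'a)" where
  "opinv A = (THE B. B \<circ> A = id \<and> A \<circ> B = id)"

definition unitary_op :: "('a::chilbert \<Rightarrow> 'a) \<Rightarrow> bool" where
  "unitary_op U \<longleftrightarrow> bounded_op U \<and> adj U \<circ> U = id \<and> U \<circ> adj U = id"

abbreviation circle :: "complex set" where
  "circle \<equiv> sphere 0 1"

definition circ_sets :: "complex set set" where
  "circ_sets = sets (restrict_space borel circle)"

definition spectral_measure :: "(complex set \<Rightarrow> ('a::chilbert \<Rightarrow> 'a)) \<Rightarrow> bool" where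
  "spectral_measure E \<longleftrightarrow>
     (\<forall>B\<in>circ_sets. bounded_op (E B) \<and> is_adjoint (E B) (E B) \<and> E B \<circ> E B = E B) \<and>
     E {} = (\<lambda>x. 0) \<and> E circle = id \<and>
     (\<forall>A\<in>circ_sets. \<forall>B\<in>circ_sets. E (A \<inter> B) = E A \<circ> E B) \<and>
     (\<forall>F. range F \<subseteq> circ_sets \<longrightarrow> disjoint_family F \<longrightarrow>
        (\<forall>x. (\<lambda>n. E (F n) x) sums E (\<Union>n. F n) x))"

text \<open>The positive scalar measure \<open>B \<mapsto> \<langle>E(B)x,x\<rangle> = \<parallel>E(B)x\<parallel>\<^sup>2\<close>.\<close>
definition spec_qmeasure :: "(complex set \<Rightarrow> ('a::chilbert \<Rightarrow> 'a)) \<Rightarrow> 'a \<Rightarrow> complex measure" where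
  "spec_qmeasure E x = measure_of circle circ_sets (\<lambda>B. ennreal ((norm (E B x))\<^sup>2))"

text \<open>\<open>A = \<integral>\<^sub>\<T> f dE\<close> (weak sense): \<open>A\<close> is a bounded operator with
  \<open>\<langle>A x, x\<rangle> = \<integral> f d\<langle>E x, x\<rangle>\<close> for all \<open>x\<close> (by polarization this determines \<open>\<langle>A x, y\<rangle>\<close>).\<close>
definition spectral_integral_is ::
  "(complex set \<Rightarrow> ('a::chilbert \<Rightarrow> 'a)) \<Rightarrow> (complex \<Rightarrow> complex) \<Rightarrow> ('a \<Rightarrow> 'a) \<Rightarrow> bool" where
  "spectral_integral_is E f A \<longleftrightarrow> bounded_op A \<and>
     (\<forall>x. cinner (A x) x = (\<integral>\<omega>. f \<omega> \<partial>(spec_qmeasure E x)))"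

definition G_delta :: "real \<Rightarrow> complex set" where
  "G_delta \<delta> = {z. (Re z)\<^sup>2 / (1 + \<delta>)\<^sup>2 + (Im z)\<^sup>2 / (1 - \<delta>)\<^sup>2 < 1}"

definition op_lambda_U :: "real \<Rightarrow> complex \<Rightarrow> ('a::chilbert \<Rightarrow> 'a) \<Rightarrow> ('a \<Rightarrow> 'a)" where
  "op_lambda_U \<delta> l U =
     (\<lambda>x. cscale (complex_of_real \<delta>) (adj U x) - cscale (l / 2) x) \<circ>
     opinv (\<lambda>x. x - cscale (l / 2) (adj U x))"

definition Psi :: "real \<Rightarrow> complex \<Rightarrow> complex \<Rightarrow> complex" where
  "Psi \<delta> \<omega> l = (2 * \<omega> * complex_of_real \<delta> - l) / (2 - \<omega> * l)"

end

theory Submission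
  imports Defs
begin

(* Write V = U* = integral of w dE(w). The integral is only weak, so there is no functional
   calculus; instead call a bounded operator S a local multiplier with symbol s if it commutes
   with E and acts on every vector whose spectral measure lives on a small set around c as
   multiplication by s(c), up to a small relative error. A local multiplier satisfies
   <S x, x> = integral of s d<E x, x>: both sides are additive over spectrally disjoint pieces
   and agree up to e |y|^2 on pieces living on small sets, so a fine partition of the circle
   gives equality. V is a local multiplier with symbol w: its quadratic form is additive, which
   forces it to commute with E, and on a piece near c its numerical range lies near c. Hence V
   is an isometry, U is its adjoint and a local multiplier with symbol conj w. Local multipliers
   are closed under sums, products and (Neumann series) inverses, so lambda_U and mu_U* have the
   symbols Psi_w(lambda) and conj Psi_w(mu), and the claim follows. *)

section \<open>Complex Hilbert spaces and their operators\<close>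

lemma cscale_zero_left [simp]: "cscale 0 (x::'a::chilbert) = 0"
  using cscale_of_real[of 0 x] by simp

lemma cscale_zero_right [simp]: "cscale c (0::'a::chilbert) = 0"
  using cscale_add_right[of c 0 0] by simp

lemma cscale_minus_left: "cscale (- c) (x::'a::chilbert) = - cscale c x"
  by (metis add_eq_0_iff cscale_add_left cscale_zero_left neg_eq_iff_add_eq_0)

lemma cscale_minus_right: "cscale c (- (x::'a::chilbert)) = - cscale c x"
  by (metis add_eq_0_iff cscale_add_right cscale_zero_right neg_eq_iff_add_eq_0)

lemma cscale_diff_left: "cscale (a - b) (x::'a::chilbert) = cscale a x - cscale b x"
  by (metis diff_conv_add_uminus cscale_add_left cscale_minus_left)

lemma cscale_diff_right: "cscale c ((x::'a::chilbert) - y) = cscale c x - cscale c y"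
  by (metis diff_conv_add_uminus cscale_add_right cscale_minus_right)

lemma cinner_add_right: "cinner (x::'a::chilbert) (y + z) = cinner x y + cinner x z"
  by (metis cinner_add_left cinner_commute complex_cnj_add)

lemma cinner_cscale_right: "cinner (x::'a::chilbert) (cscale c y) = cnj c * cinner x y"
  by (metis cinner_cscale_left cinner_commute complex_cnj_mult)

lemma cinner_zero_left [simp]: "cinner (0::'a::chilbert) y = 0"
  using cinner_add_left[of 0 0 y] by simp

lemma cinner_zero_right [simp]: "cinner (x::'a::chilbert) 0 = 0"
  using cinner_add_right[of x 0 0] by simp

lemma cinner_minus_left: "cinner (- (x::'a::chilbert)) y = - cinner x y"
  by (metis add_eq_0_iff cinner_add_left cinner_zero_left neg_eq_iff_add_eq_0)

lemma cinner_minus_right: "cinner (x::'a::chilbert) (- y) = - cinner x y"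
  by (metis add_eq_0_iff cinner_add_right cinner_zero_right neg_eq_iff_add_eq_0)

lemma cinner_diff_left: "cinner ((x::'a::chilbert) - y) z = cinner x z - cinner y z"
  by (metis diff_conv_add_uminus cinner_add_left cinner_minus_left)

lemma cinner_diff_right: "cinner (x::'a::chilbert) (y - z) = cinner x y - cinner x z"
  by (metis diff_conv_add_uminus cinner_add_right cinner_minus_right)

lemma cinner_sum_left: "cinner (sum f S) (y::'a::chilbert) = (\<Sum>i\<in>S. cinner (f i) y)"
  by (induction S rule: infinite_finite_induct) (auto simp: cinner_add_left)

lemmas cinner_simps = cinner_add_left cinner_add_right cinner_diff_left cinner_diff_right
  cinner_cscale_left cinner_cscale_right cinner_minus_left cinner_minus_right

lemma cinner_self_eq_0_iff [simp]: "cinner (x::'a::chilbert) x = 0 \<longleftrightarrow> x = 0"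
  by (simp add: cinner_self_norm)

lemma cinner_eq_0_imp_eq_0: "(\<And>w. cinner (x::'a::chilbert) w = 0) \<Longrightarrow> x = 0"
  using cinner_self_eq_0_iff by blast

lemma norm_square_eq_Re_cinner: "(norm (x::'a::chilbert))\<^sup>2 = Re (cinner x x)"
  by (simp add: cinner_self_norm)

lemma norm_cscale: "norm (cscale c (x::'a::chilbert)) = cmod c * norm x"
proof -
  have "cinner (cscale c x) (cscale c x) = c * cnj c * cinner x x"
    by (simp add: cinner_simps mult.assoc)
  also have "\<dots> = of_real ((cmod c * norm x)\<^sup>2)"
    by (simp only: cinner_self_norm complex_norm_square[symmetric] of_real_mult[symmetric]
        power_mult_distrib)
  finally have "(norm (cscale c x))\<^sup>2 = (cmod c * norm x)\<^sup>2"
    by (simp only: cinner_self_norm of_real_eq_iff)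
  then show ?thesis by simp
qed

lemma norm_add_square:
  "(norm ((x::'a::chilbert) + y))\<^sup>2 = (norm x)\<^sup>2 + (norm y)\<^sup>2 + 2 * Re (cinner x y)"
  by (simp add: norm_square_eq_Re_cinner cinner_simps cinner_commute[of y x])

lemma pythagoras:
  "cinner (x::'a::chilbert) y = 0 \<Longrightarrow> (norm (x + y))\<^sup>2 = (norm x)\<^sup>2 + (norm y)\<^sup>2"
  by (simp add: norm_add_square)

lemma norm_cinner_le: "cmod (cinner (x::'a::chilbert) y) \<le> norm x * norm y"
proof (cases "y = 0")
  case False
  define a where "a = cinner x y / (norm y)\<^sup>2"
  have "cinner (x - cscale a y) y = 0"
    using False by (simp add: a_def cinner_simps cinner_self_norm)
  then have "(norm x)\<^sup>2 = (norm (x - cscale a y))\<^sup>2 + (norm (cscale a y))\<^sup>2"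
    using pythagoras[of "x - cscale a y" "cscale a y"] by (simp add: cinner_simps)
  also have "norm (cscale a y) = cmod (cinner x y) / norm y"
    using False by (simp add: a_def norm_cscale norm_divide norm_mult power2_eq_square)
  finally have "(cmod (cinner x y) / norm y)\<^sup>2 \<le> (norm x)\<^sup>2" by simp
  then have "cmod (cinner x y) / norm y \<le> norm x" by (rule power2_le_imp_le) simp
  with False show ?thesis by (simp add: divide_le_eq mult.commute)
qed simp

lemma clinear_op_add: "clinear_op A \<Longrightarrow> A (x + y) = A x + A y"
  by (simp add: clinear_op_def)

lemma clinear_op_cscale: "clinear_op A \<Longrightarrow> A (cscale c x) = cscale c (A x)"
  by (simp add: clinear_op_def)

lemma clinear_op_zero: "clinear_op A \<Longrightarrow> A 0 = 0"
  by (metis add_cancel_right_right clinear_op_add)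

lemma clinear_op_minus: "clinear_op A \<Longrightarrow> A (- x) = - A x"
  by (metis add_eq_0_iff clinear_op_add clinear_op_zero neg_eq_iff_add_eq_0)

lemma clinear_op_diff: "clinear_op A \<Longrightarrow> A (x - y) = A x - A y"
  by (metis diff_conv_add_uminus clinear_op_add clinear_op_minus)

lemma clinear_op_ident: "clinear_op (\<lambda>x::'a::chilbert. x)"
  by (simp add: clinear_op_def)

lemma clinear_op_compose: "clinear_op S \<Longrightarrow> clinear_op T \<Longrightarrow> clinear_op (\<lambda>x. S (T x))"
  by (simp add: clinear_op_def)

lemma clinear_op_funpow: "clinear_op T \<Longrightarrow> clinear_op (T ^^ n)"
  by (induction n) (simp_all add: clinear_op_def)

lemma clinear_op_sub: "clinear_op S \<Longrightarrow> clinear_op T \<Longrightarrow> clinear_op (\<lambda>x. S x - T x)"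
  by (simp add: clinear_op_def cscale_diff_right)

lemma clinear_op_const_cscale: "clinear_op S \<Longrightarrow> clinear_op (\<lambda>x. cscale a (S x))"
  by (simp add: clinear_op_def cscale_add_right cscale_cscale mult.commute)

lemma cinner_isometry:
  assumes T: "clinear_op T" and iso: "\<And>w. norm (T w) = norm w"
  shows "cinner (T x) (T y) = cinner (x::'a::chilbert) y"
proof -
  have re: "Re (cinner (T x) (T y)) = Re (cinner x y)" for x y
    using norm_add_square[of "T x" "T y"] norm_add_square[of x y] iso[of "x + y"] iso[of x] iso[of y]
    by (simp add: clinear_op_add[OF T])
  have "Im (cinner (T x) (T y)) = Im (cinner x y)"
    using re[of x "cscale \<i> y"] by (simp add: clinear_op_cscale[OF T] cinner_cscale_right)
  with re[of x y] show ?thesis by (simp add: complex_eq_iff)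
qed

lemma bounded_linear_cscale: "bounded_linear (cscale c :: 'a::chilbert \<Rightarrow> 'a)"
proof (rule bounded_linear_intro[where K="cmod c"])
  show "cscale c (r *\<^sub>R x) = r *\<^sub>R cscale c x" for r and x :: 'a
    by (metis cscale_of_real cscale_cscale mult.commute)
qed (simp_all add: cscale_add_right norm_cscale mult.commute)

lemma bounded_op_iff: "bounded_op A \<longleftrightarrow> clinear_op A \<and> bounded_linear A"
proof
  assume A: "bounded_op A"
  then obtain K where "\<And>x. norm (A x) \<le> norm x * K" unfolding bounded_op_def by blast
  with A show "clinear_op A \<and> bounded_linear A"
    unfolding bounded_op_def
    by (metis bounded_linear_intro clinear_op_add clinear_op_cscale cscale_of_real)
next
  assume "clinear_op A \<and> bounded_linear A"
  then show "bounded_op A" unfolding bounded_op_def using bounded_linear.bounded by blast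
qed

lemma bounded_opI:
  "clinear_op A \<Longrightarrow> (\<And>x. norm (A x) \<le> K * norm x) \<Longrightarrow> bounded_op A"
  unfolding bounded_op_def by (metis mult.commute)

lemma bounded_op_pos_bound: "bounded_op A \<Longrightarrow> \<exists>K>0. \<forall>x. norm (A x) \<le> K * norm x"
  unfolding bounded_op_iff by (metis bounded_linear.pos_bounded mult.commute)

lemma bounded_op_ident: "bounded_op (\<lambda>x::'a::chilbert. x)"
  by (simp add: bounded_op_iff clinear_op_ident)

lemma bounded_op_compose: "bounded_op S \<Longrightarrow> bounded_op T \<Longrightarrow> bounded_op (\<lambda>x. S (T x))"
  by (simp add: bounded_op_iff clinear_op_compose bounded_linear_compose)

lemma bounded_op_sub: "bounded_op S \<Longrightarrow> bounded_op T \<Longrightarrow> bounded_op (\<lambda>x. S x - T x)"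
  by (simp add: bounded_op_iff clinear_op_sub bounded_linear_sub)

lemma bounded_op_const_cscale: "bounded_op S \<Longrightarrow> bounded_op (\<lambda>x. cscale a (S x))"
  by (simp add: bounded_op_iff clinear_op_const_cscale bounded_linear_compose[OF bounded_linear_cscale])

lemma adj_eqI: "is_adjoint A (B::'a::chilbert \<Rightarrow> 'a) \<Longrightarrow> adj A = B"
  unfolding adj_def
proof (rule the_equality)
  fix C assume "is_adjoint A B" and "is_adjoint A C"
  then have "cinner (C y - B y) x = 0" for x y
    unfolding is_adjoint_def by (metis cinner_commute cinner_diff_left diff_self)
  then show "C = B" by (metis cinner_eq_0_imp_eq_0 eq_iff_diff_eq_0 ext)
qed

lemma opinv_eqI: "(\<And>w. R (A w) = w) \<Longrightarrow> (\<And>w. A (R w) = w) \<Longrightarrow> opinv A = R"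
  unfolding opinv_def
proof (rule the_equality)
  fix B assume "\<And>w. R (A w) = w" "\<And>w. A (R w) = w" and "B \<circ> A = id \<and> A \<circ> B = id"
  then show "B = R" by (metis comp_apply id_apply ext)
qed (auto simp: fun_eq_iff)

lemma norm_cinner_sub_le:
  "norm (cinner (A y) y - s * of_real ((norm y)\<^sup>2)) \<le> norm (A y - cscale s y) * norm (y::'a::chilbert)"
  using norm_cinner_le[of "A y - cscale s y" y] by (simp add: cinner_simps cinner_self_norm)

lemma norm_compose_sub_cscale_le:
  assumes "clinear_op S" and "\<And>x. norm (S x) \<le> K * norm x"
  shows "norm (S (T y) - cscale (s * t) y)
    \<le> K * norm (T y - cscale t y) + cmod t * norm (S y - cscale s (y::'a::chilbert))"
proof -
  have "S (T y) - cscale (s * t) y = S (T y - cscale t y) + cscale t (S y - cscale s y)"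
    using assms(1) by (simp add: clinear_op_diff clinear_op_cscale cscale_diff_right cscale_cscale mult.commute)
  then show ?thesis
    using norm_triangle_ineq[of "S (T y - cscale t y)" "cscale t (S y - cscale s y)"] assms(2)[of "T y - cscale t y"]
    by (simp add: norm_cscale)
qed

lemma norm_inverse_sub_cscale_le:
  assumes "clinear_op R" and "\<And>x. norm (R x) \<le> K * norm x" and "\<And>w. R (T w) = w" and "t \<noteq> 0"
  shows "norm (R y - cscale (1 / t) y) \<le> K / cmod t * norm (T y - cscale t (y::'a::chilbert))"
proof -
  have "R (cscale t y - T y) = cscale t (R y) - y"
    using assms(1,3) by (simp add: clinear_op_diff clinear_op_cscale)
  then have "R y - cscale (1 / t) y = cscale (1 / t) (R (cscale t y - T y))"
    using assms(4) by (simp add: cscale_diff_right cscale_cscale cscale_one)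
  then show ?thesis
    using assms(2)[of "cscale t y - T y"] assms(4)
    by (simp add: norm_cscale norm_divide norm_minus_commute divide_right_mono)
qed

lemma abs_square_diff_le:
  fixes p q a :: real
  assumes "0 \<le> p" and "0 \<le> q" and "\<bar>p - q\<bar> \<le> a * q" and "a \<le> 1"
  shows "\<bar>p\<^sup>2 - q\<^sup>2\<bar> \<le> 3 * a * q\<^sup>2"
proof -
  have "p\<^sup>2 - q\<^sup>2 = (p - q) * (p + q)" by (simp add: power2_eq_square algebra_simps)
  then have "\<bar>p\<^sup>2 - q\<^sup>2\<bar> = \<bar>p - q\<bar> * (p + q)"
    using assms(1,2) by (simp add: abs_mult)
  also have "\<dots> \<le> a * q * (3 * q)"
  proof (rule mult_mono)
    have "a * q \<le> q" using mult_left_le[of a q] assms by (simp add: mult.commute)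
    then show "p + q \<le> 3 * q" using assms(3) by (simp add: abs_le_iff)
  qed (use assms in auto)
  finally show ?thesis by (simp add: power2_eq_square)
qed

lemma polarization_bound:
  fixes W :: "'a::chilbert \<Rightarrow> 'a" and P :: "'a \<Rightarrow> bool"
  assumes W: "clinear_op W"
    and P: "\<And>y z c. P y \<Longrightarrow> P z \<Longrightarrow> P (y + cscale c z)"
    and est: "\<And>y. P y \<Longrightarrow> cmod (cinner (W y) y) \<le> r * (norm y)\<^sup>2"
    and y: "P y" and z: "P z"
  shows "cmod (cinner (W y) z) \<le> r * ((norm y)\<^sup>2 + (norm z)\<^sup>2)"
proof -
  define g where "g a = cinner (W (y + cscale a z)) (y + cscale a z)" for a
  have g: "g a = cinner (W y) y + cnj a * cinner (W y) z + a * cinner (W z) y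
      + a * cnj a * cinner (W z) z" for a
    unfolding g_def by (simp add: clinear_op_add[OF W] clinear_op_cscale[OF W] cinner_simps algebra_simps)
  have "4 * cinner (W y) z = (g 1 - g (-1)) + \<i> * (g \<i> - g (-\<i>))"
    unfolding g by (simp add: algebra_simps)
  then have "4 * cmod (cinner (W y) z) = cmod ((g 1 - g (-1)) + \<i> * (g \<i> - g (-\<i>)))"
    by (metis norm_mult norm_numeral)
  also have "\<dots> \<le> cmod (g 1) + cmod (g (-1)) + (cmod (g \<i>) + cmod (g (-\<i>)))"
    using norm_triangle_ineq[of "g 1 - g (-1)" "\<i> * (g \<i> - g (-\<i>))"]
      norm_triangle_ineq4[of "g 1" "g (-1)"] norm_triangle_ineq4[of "g \<i>" "g (-\<i>)"]
    by (simp add: norm_mult)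
  also have "\<dots> \<le> r * (norm (y + cscale 1 z))\<^sup>2 + r * (norm (y + cscale (-1) z))\<^sup>2
      + (r * (norm (y + cscale \<i> z))\<^sup>2 + r * (norm (y + cscale (-\<i>) z))\<^sup>2)"
    unfolding g_def using y z by (intro add_mono est P)
  also have "\<dots> = 4 * (r * ((norm y)\<^sup>2 + (norm z)\<^sup>2))"
    by (simp add: norm_add_square norm_cscale cinner_cscale_right algebra_simps)
  finally show ?thesis by simp
qed

lemma norm_le_numerical_radius:
  fixes W :: "'a::chilbert \<Rightarrow> 'a" and P :: "'a \<Rightarrow> bool"
  assumes W: "clinear_op W"
    and P: "\<And>y z c. P y \<Longrightarrow> P z \<Longrightarrow> P (y + cscale c z)" and PW: "\<And>y. P y \<Longrightarrow> P (W y)"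
    and est: "\<And>y. P y \<Longrightarrow> cmod (cinner (W y) y) \<le> r * (norm y)\<^sup>2"
    and r: "0 \<le> r" and y: "P y"
  shows "norm (W y) \<le> 2 * r * norm y"
proof (cases "W y = 0")
  case False
  then have "y \<noteq> 0" using clinear_op_zero[OF W] by auto
  define z where "z = cscale (of_real (norm y / norm (W y))) (W y)"
  have "P 0" using P[OF y y, of "-1"] by (simp add: cscale_minus_left cscale_one)
  then have "P z" unfolding z_def using P[of 0 "W y"] PW[OF y] by simp
  have "norm z = norm y" using False by (simp add: z_def norm_cscale norm_divide)
  have "cinner (W y) z = of_real (norm y * norm (W y))"
    using False by (simp add: z_def cinner_cscale_right cinner_self_norm power2_eq_square)
  then have "norm y * norm (W y) \<le> r * (2 * (norm y)\<^sup>2)"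
    using polarization_bound[OF W P est y \<open>P z\<close>] \<open>norm z = norm y\<close> by (simp add: norm_mult)
  with \<open>y \<noteq> 0\<close> show ?thesis by (simp add: power2_eq_square algebra_simps)
qed (use r in simp)

section \<open>Neumann series and Moebius transforms of operators\<close>

definition neumann_series :: "('a::chilbert \<Rightarrow> 'a) \<Rightarrow> complex \<Rightarrow> 'a \<Rightarrow> 'a" where
  "neumann_series T a w = (\<Sum>n. cscale (a ^ n) ((T ^^ n) w))"

definition moebius_op :: "complex \<Rightarrow> complex \<Rightarrow> ('a::chilbert \<Rightarrow> 'a) \<Rightarrow> 'a \<Rightarrow> 'a" where
  "moebius_op b a T = (\<lambda>x. cscale b (T x) - cscale a x) \<circ> neumann_series T a"

lemma summable_norm_cscale_power:
  fixes f :: "nat \<Rightarrow> 'a::chilbert"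
  assumes "\<And>n. norm (f n) \<le> K" and "cmod a < 1"
  shows "summable (\<lambda>n. norm (cscale (a ^ n) (f n)))"
proof (rule summable_comparison_test')
  show "summable (\<lambda>n. K * cmod a ^ n)"
    using assms(2) by (simp add: summable_mult)
  show "norm (norm (cscale (a ^ n) (f n))) \<le> K * cmod a ^ n" for n
    using assms(1)[of n] by (simp add: norm_cscale norm_power mult.commute mult_right_mono)
qed

lemma norm_funpow_le:
  fixes T :: "'a::real_normed_vector \<Rightarrow> 'a"
  shows "(\<And>w. norm (T w) \<le> norm w) \<Longrightarrow> norm ((T ^^ n) w) \<le> norm w"
  by (induction n) (auto intro: order_trans)

context
  fixes T :: "'a::chilbert \<Rightarrow> 'a" and a :: complex
  assumes T: "clinear_op T" and contraction: "\<And>w. norm (T w) \<le> norm w" and a: "cmod a < 1"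
begin

lemma summable_neumann_series:
  "summable (\<lambda>n. cscale (a ^ n) ((T ^^ (n + k)) w))"
  by (rule summable_norm_cancel, rule summable_norm_cscale_power[OF norm_funpow_le[OF contraction] a])

lemma neumann_series_commute: "neumann_series T a (T w) = T (neumann_series T a w)"
proof -
  have "bounded_linear T"
    using T contraction bounded_opI[of T 1] by (simp add: bounded_op_iff)
  then have "T (neumann_series T a w) = (\<Sum>n. T (cscale (a ^ n) ((T ^^ n) w)))"
    unfolding neumann_series_def using summable_neumann_series[of 0] by (simp add: bounded_linear.suminf)
  then show ?thesis
    by (simp add: neumann_series_def clinear_op_cscale[OF T] funpow_swap1)
qed

lemma neumann_series_right_inverse: "neumann_series T a w - cscale a (T (neumann_series T a w)) = w"
proof -
  have "cscale a (T (neumann_series T a w)) = cscale a (\<Sum>n. cscale (a ^ n) ((T ^^ Suc n) w))"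
    by (simp only: flip: neumann_series_commute) (simp add: neumann_series_def funpow_swap1)
  also have "\<dots> = (\<Sum>n. cscale (a ^ Suc n) ((T ^^ Suc n) w))"
    using summable_neumann_series[of 1]
    by (simp add: bounded_linear.suminf[OF bounded_linear_cscale] cscale_cscale)
  also have "\<dots> = neumann_series T a w - w"
    unfolding neumann_series_def
    using suminf_split_head[OF summable_neumann_series[of 0, simplified]] by (simp add: cscale_one)
  finally show ?thesis by simp
qed

lemma clinear_op_neumann_series: "clinear_op (neumann_series T a)"
  unfolding clinear_op_def neumann_series_def
  using summable_neumann_series[of 0]
  by (simp add: suminf_add[symmetric] bounded_linear.suminf[OF bounded_linear_cscale]
      clinear_op_add[OF clinear_op_funpow[OF T]] clinear_op_cscale[OF clinear_op_funpow[OF T]]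
      cscale_add_right cscale_cscale mult.commute)

lemma neumann_series_left_inverse: "neumann_series T a (w - cscale a (T w)) = w"
  using neumann_series_right_inverse[of w]
  by (simp add: clinear_op_diff[OF clinear_op_neumann_series] clinear_op_cscale[OF clinear_op_neumann_series]
      neumann_series_commute)

lemma bounded_op_neumann_series: "bounded_op (neumann_series T a)"
proof (rule bounded_opI[OF clinear_op_neumann_series])
  fix w
  have "norm (neumann_series T a w) \<le> (\<Sum>n. norm (cscale (a ^ n) ((T ^^ n) w)))"
    unfolding neumann_series_def
    by (rule summable_norm, rule summable_norm_cscale_power[OF norm_funpow_le[OF contraction] a])
  also have "\<dots> \<le> (\<Sum>n. cmod a ^ n * norm w)"
    using norm_funpow_le[OF contraction] a
    by (intro suminf_le summable_norm_cscale_power summable_mult2)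
      (auto simp: norm_cscale norm_power intro!: mult_left_mono)
  also have "\<dots> = 1 / (1 - cmod a) * norm w"
    using a by (simp add: suminf_mult2[symmetric] suminf_geometric)
  finally show "norm (neumann_series T a w) \<le> 1 / (1 - cmod a) * norm w" .
qed

lemma opinv_eq_neumann_series: "opinv (\<lambda>x. x - cscale a (T x)) = neumann_series T a"
  by (rule opinv_eqI) (simp_all add: neumann_series_left_inverse neumann_series_right_inverse)

lemma moebius_op_eq_opinv:
  "(\<lambda>x. cscale b (T x) - cscale a x) \<circ> opinv (\<lambda>x. x - cscale a (T x)) = moebius_op b a T"
  by (simp add: moebius_op_def opinv_eq_neumann_series)

lemma moebius_op_eq: "moebius_op b a T x = neumann_series T a (cscale b (T x) - cscale a x)"
  by (simp add: moebius_op_def clinear_op_diff[OF clinear_op_neumann_series]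
      clinear_op_cscale[OF clinear_op_neumann_series] neumann_series_commute)

end

lemma is_adjoint_moebius_op:
  assumes adj: "is_adjoint T T'"
    and T: "clinear_op T" "\<And>w. norm (T w) \<le> norm w"
    and T': "clinear_op T'" "\<And>w. norm (T' w) \<le> norm w"
    and a: "cmod a < 1"
  shows "is_adjoint (moebius_op b a T) (moebius_op (cnj b) (cnj a) T')"
  unfolding is_adjoint_def
proof (intro allI)
  fix x y
  let ?N = "neumann_series T a" and ?N' = "neumann_series T' (cnj a)"
  let ?z = "cscale (cnj b) (T' y) - cscale (cnj a) y"
  have a': "cmod (cnj a) < 1" using a by simp
  have "cinner (moebius_op b a T x) y = cinner (?N x) ?z"
    using adj by (simp add: moebius_op_def is_adjoint_def cinner_simps)
  also have "\<dots> = cinner (?N x) (?N' ?z - cscale (cnj a) (T' (?N' ?z)))"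
    by (simp add: neumann_series_right_inverse[OF T' a'])
  also have "\<dots> = cinner (?N x - cscale a (T (?N x))) (?N' ?z)"
    using adj by (simp add: is_adjoint_def cinner_simps)
  also have "\<dots> = cinner x (moebius_op (cnj b) (cnj a) T' y)"
    by (simp add: neumann_series_right_inverse[OF T a] moebius_op_eq[OF T' a'])
  finally show "cinner (moebius_op b a T x) y = cinner x (moebius_op (cnj b) (cnj a) T' y)" .
qed

section \<open>Spectral measures on the circle\<close>

lemma circ_sets_iff: "B \<in> circ_sets \<longleftrightarrow> B \<subseteq> circle \<and> B \<in> sets borel"
  unfolding circ_sets_def by (subst sets_restrict_space_iff) auto

lemma sigma_algebra_circ_sets: "sigma_algebra circle circ_sets"
  using sets.sigma_algebra_axioms[of "restrict_space borel circle"]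
  by (simp add: circ_sets_def space_restrict_space)

lemma circ_sets_empty [simp]: "{} \<in> circ_sets"
  and circ_sets_circle [simp]: "circle \<in> circ_sets"
  by (simp_all add: circ_sets_iff)

lemma circ_sets_Int: "A \<in> circ_sets \<Longrightarrow> B \<in> circ_sets \<Longrightarrow> A \<inter> B \<in> circ_sets"
  and circ_sets_Un: "A \<in> circ_sets \<Longrightarrow> B \<in> circ_sets \<Longrightarrow> A \<union> B \<in> circ_sets"
  and circ_sets_Diff: "A \<in> circ_sets \<Longrightarrow> B \<in> circ_sets \<Longrightarrow> A - B \<in> circ_sets"
  and circ_sets_subset: "A \<in> circ_sets \<Longrightarrow> A \<subseteq> circle"
  by (auto simp: circ_sets_iff)

lemma circ_sets_UN: "finite I \<Longrightarrow> (\<And>i. i \<in> I \<Longrightarrow> P i \<in> circ_sets) \<Longrightarrow> (\<Union>i\<in>I. P i) \<in> circ_sets"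
  by (induction I rule: finite_induct) (auto intro: circ_sets_Un)

lemma continuous_on_circle_bounded:
  "continuous_on circle f \<Longrightarrow> \<exists>K>0. \<forall>w\<in>circle. norm (f w) \<le> K"
  by (metis bounded_pos compact_continuous_image compact_imp_bounded compact_sphere image_eqI)

definition grid_cell :: "nat \<Rightarrow> int \<times> int \<Rightarrow> complex set" where
  "grid_cell n = (\<lambda>(j, k). {w \<in> circle. \<lfloor>real n * Re w\<rfloor> = j \<and> \<lfloor>real n * Im w\<rfloor> = k})"

definition grid_index :: "nat \<Rightarrow> (int \<times> int) set" where
  "grid_index n = {-int n..int n} \<times> {-int n..int n}"

lemma finite_grid_index: "finite (grid_index n)"
  by (simp add: grid_index_def)

lemma grid_cell_circ_sets: "grid_cell n i \<in> circ_sets"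
proof -
  obtain j k where i: "i = (j, k)" by force
  have "grid_cell n i = circle \<inter> ({w. j \<le> real n * Re w} \<inter> {w. real n * Re w < j + 1}
     \<inter> {w. k \<le> real n * Im w} \<inter> {w. real n * Im w < k + 1})"
    unfolding grid_cell_def i by (auto simp: floor_eq_iff)
  also have "\<dots> \<in> sets borel" by measurable
  finally show ?thesis unfolding circ_sets_iff by (auto simp: grid_cell_def i)
qed

lemma disjoint_family_grid_cell: "disjoint_family_on (grid_cell n) I"
  by (auto simp: disjoint_family_on_def grid_cell_def)

lemma UN_grid_cell: "(\<Union>i\<in>grid_index n. grid_cell n i) = circle"
proof (intro equalityI subsetI)
  fix w :: complex assume w: "w \<in> circle"
  have "\<bar>Re w\<bar> \<le> 1" "\<bar>Im w\<bar> \<le> 1"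
    using w abs_Re_le_cmod[of w] abs_Im_le_cmod[of w] by auto
  then have "\<bar>real n * Re w\<bar> \<le> real n" "\<bar>real n * Im w\<bar> \<le> real n"
    by (auto simp: abs_mult intro: mult_left_le)
  then have "(\<lfloor>real n * Re w\<rfloor>, \<lfloor>real n * Im w\<rfloor>) \<in> grid_index n"
    unfolding grid_index_def by (auto simp: le_floor_iff floor_le_iff abs_le_iff)
  moreover have "w \<in> grid_cell n (\<lfloor>real n * Re w\<rfloor>, \<lfloor>real n * Im w\<rfloor>)"
    using w by (simp add: grid_cell_def)
  ultimately show "w \<in> (\<Union>i\<in>grid_index n. grid_cell n i)" by blast
qed (auto simp: grid_cell_def)

lemma grid_cell_diameter:
  assumes "n > 0" and "w \<in> grid_cell n i" and "c \<in> grid_cell n i"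
  shows "dist w c < 2 / real n"
proof -
  obtain j k where i: "i = (j, k)" by force
  have "\<bar>real n * Re w - real n * Re c\<bar> < 1" "\<bar>real n * Im w - real n * Im c\<bar> < 1"
    using assms by (auto simp: grid_cell_def i floor_eq_iff)
  then have "real n * \<bar>Re (w - c)\<bar> < 1" "real n * \<bar>Im (w - c)\<bar> < 1"
    by (simp_all add: abs_mult flip: right_diff_distrib)
  then have "\<bar>Re (w - c)\<bar> < 1 / real n" "\<bar>Im (w - c)\<bar> < 1 / real n"
    using assms(1) by (simp_all add: field_simps)
  then show ?thesis
    using cmod_le[of "w - c"] by (simp add: dist_norm)
qed

definition spectrally_additive ::
  "(complex set \<Rightarrow> ('a::chilbert \<Rightarrow> 'a)) \<Rightarrow> ('a \<Rightarrow> 'b::real_normed_vector) \<Rightarrow> bool" where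
  "spectrally_additive E Q \<longleftrightarrow> (\<forall>B\<in>circ_sets. \<forall>C\<in>circ_sets. \<forall>y z.
     B \<inter> C = {} \<longrightarrow> E B y = y \<longrightarrow> E C z = z \<longrightarrow> Q (y + z) = Q y + Q z)"

definition concentrated :: "(complex set \<Rightarrow> ('a::chilbert \<Rightarrow> 'a)) \<Rightarrow> complex \<Rightarrow> real \<Rightarrow> 'a \<Rightarrow> bool" where
  "concentrated E c d y \<longleftrightarrow> (\<exists>B\<in>circ_sets. c \<in> B \<and> B \<subseteq> ball c d \<and> E B y = y)"

lemma spectrally_additiveD:
  "spectrally_additive E Q \<Longrightarrow> B \<in> circ_sets \<Longrightarrow> C \<in> circ_sets \<Longrightarrow> B \<inter> C = {} \<Longrightarrow>
    E B y = y \<Longrightarrow> E C z = z \<Longrightarrow> Q (y + z) = Q y + Q z"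
  unfolding spectrally_additive_def by blast

lemma spectrally_additive_diff:
  "spectrally_additive E P \<Longrightarrow> spectrally_additive E Q \<Longrightarrow> spectrally_additive E (\<lambda>y. P y - Q y)"
  unfolding spectrally_additive_def by (simp add: algebra_simps)

lemma concentrated_in_circle: "concentrated E c d y \<Longrightarrow> c \<in> circle"
  unfolding concentrated_def using circ_sets_subset by blast

locale circle_spectral_measure =
  fixes E :: "complex set \<Rightarrow> 'a::chilbert \<Rightarrow> 'a"
  assumes spectral_measure: "spectral_measure E"
begin

lemma bounded_op_E: "B \<in> circ_sets \<Longrightarrow> bounded_op (E B)"
  using spectral_measure unfolding spectral_measure_def by blast

lemma clinear_op_E: "B \<in> circ_sets \<Longrightarrow> clinear_op (E B)"
  using bounded_op_E unfolding bounded_op_def by blast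

lemma cinner_E_commute: "B \<in> circ_sets \<Longrightarrow> cinner (E B x) y = cinner x (E B y)"
  using spectral_measure unfolding spectral_measure_def is_adjoint_def by blast

lemma E_empty [simp]: "E {} x = 0"
  using spectral_measure unfolding spectral_measure_def by simp

lemma E_circle [simp]: "E circle x = x"
  using spectral_measure unfolding spectral_measure_def by simp

lemma E_Int: "A \<in> circ_sets \<Longrightarrow> B \<in> circ_sets \<Longrightarrow> E (A \<inter> B) x = E A (E B x)"
  using spectral_measure unfolding spectral_measure_def by (metis comp_apply)

lemma E_idem [simp]: "B \<in> circ_sets \<Longrightarrow> E B (E B x) = E B x"
  using E_Int[of B B] by simp

lemma E_disjoint_eq_0: "A \<in> circ_sets \<Longrightarrow> B \<in> circ_sets \<Longrightarrow> A \<inter> B = {} \<Longrightarrow> E B y = y \<Longrightarrow> E A y = 0"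
  by (metis E_Int E_empty)

lemma E_sums:
  "range F \<subseteq> circ_sets \<Longrightarrow> disjoint_family F \<Longrightarrow> (\<lambda>n. E (F n) x) sums E (\<Union>n. F n) x"
  using spectral_measure unfolding spectral_measure_def by blast

lemma E_Un:
  assumes "A \<in> circ_sets" and "B \<in> circ_sets" and "A \<inter> B = {}"
  shows "E (A \<union> B) x = E A x + E B x"
proof -
  have "range (binaryset A B) \<subseteq> circ_sets" "disjoint_family (binaryset A B)"
    using assms by (auto simp: binaryset_def disjoint_family_on_def)
  then have "(\<lambda>n. E (binaryset A B n) x) sums E (A \<union> B) x"
    using E_sums[of "binaryset A B"] by (simp only: UN_binaryset_eq)
  moreover have "(\<lambda>n. E (binaryset A B n) x) sums (\<Sum>n\<in>{0, 1}. E (binaryset A B n) x)"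
    by (rule sums_finite) (auto simp: binaryset_def)
  ultimately show ?thesis by (simp add: sums_iff binaryset_def)
qed

lemma E_compl:
  assumes "B \<in> circ_sets" shows "E (circle - B) x = x - E B x"
proof -
  have "(circle - B) \<union> B = circle" "(circle - B) \<inter> B = {}"
    using circ_sets_subset[OF assms] by auto
  then show ?thesis using E_Un[of "circle - B" B x] assms by (simp add: circ_sets_Diff eq_diff_eq)
qed

lemma cinner_E_disjoint:
  "A \<in> circ_sets \<Longrightarrow> B \<in> circ_sets \<Longrightarrow> A \<inter> B = {} \<Longrightarrow> cinner (E A x) (E B y) = 0"
  by (metis E_Int E_empty cinner_E_commute cinner_zero_right)

lemma E_sum:
  assumes "finite I" and "\<And>i. i \<in> I \<Longrightarrow> P i \<in> circ_sets" and "disjoint_family_on P I"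
  shows "(\<Sum>i\<in>I. E (P i) x) = E (\<Union>i\<in>I. P i) x"
  using assms
proof (induction I rule: finite_induct)
  case (insert j I)
  then have "P j \<inter> (\<Union>i\<in>I. P i) = {}"
    by (fastforce simp: disjoint_family_on_def)
  with insert show ?case
    by (simp add: E_Un circ_sets_UN disjoint_family_on_mono[OF subset_insertI])
qed simp

abbreviation \<mu> :: "'a \<Rightarrow> complex measure" where
  "\<mu> x \<equiv> spec_qmeasure E x"

lemma sets_\<mu> [simp, measurable_cong]: "sets (\<mu> x) = circ_sets"
  unfolding spec_qmeasure_def by (rule sigma_algebra.sets_measure_of_eq[OF sigma_algebra_circ_sets])

lemma space_\<mu> [simp]: "space (\<mu> x) = circle"
  unfolding spec_qmeasure_def by (rule space_measure_of) (auto dest: circ_sets_subset)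

lemma emeasure_\<mu>: "B \<in> circ_sets \<Longrightarrow> emeasure (\<mu> x) B = ennreal ((norm (E B x))\<^sup>2)"
  unfolding spec_qmeasure_def
proof (rule emeasure_measure_of_sigma[OF sigma_algebra_circ_sets])
  show "positive circ_sets (\<lambda>B. ennreal ((norm (E B x))\<^sup>2))"
    by (simp add: positive_def)
  show "countably_additive circ_sets (\<lambda>B. ennreal ((norm (E B x))\<^sup>2))"
    unfolding countably_additive_def
  proof (intro allI impI suminf_ennreal_eq)
    fix F :: "nat \<Rightarrow> complex set" assume F: "range F \<subseteq> circ_sets" "disjoint_family F"
    have "(norm (\<Sum>n<N. E (F n) x))\<^sup>2 = (\<Sum>n<N. (norm (E (F n) x))\<^sup>2)" for N
    proof (induction N)
      case (Suc N)
      have "F n \<inter> F N = {}" if "n < N" for n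
        using F(2) that by (simp add: disjoint_family_onD)
      then have "cinner (\<Sum>n<N. E (F n) x) (E (F N) x) = 0"
        unfolding cinner_sum_left using F(1) by (intro sum.neutral ballI cinner_E_disjoint) auto
      with Suc show ?case by (simp add: pythagoras)
    qed simp
    moreover have "(\<lambda>N. (norm (\<Sum>n<N. E (F n) x))\<^sup>2) \<longlonglongrightarrow> (norm (E (\<Union>n. F n) x))\<^sup>2"
      using E_sums[OF F] unfolding sums_def by (intro tendsto_intros)
    ultimately show "(\<lambda>n. (norm (E (F n) x))\<^sup>2) sums (norm (E (\<Union>n. F n) x))\<^sup>2"
      by (simp add: sums_def)
  qed auto
qed

lemma measure_\<mu>_circle: "measure (\<mu> x) circle = (norm x)\<^sup>2"
  by (simp add: measure_def emeasure_\<mu>)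

lemma finite_measure_\<mu>: "finite_measure (\<mu> x)"
  by (rule finite_measureI) (simp add: emeasure_\<mu>)

lemma borel_measurable_\<mu>: "continuous_on circle f \<Longrightarrow> f \<in> borel_measurable (\<mu> x)"
  using borel_measurable_continuous_on_restrict[of circle f]
  by (simp add: measurable_def circ_sets_def space_restrict_space)

lemma integrable_\<mu>:
  fixes f :: "complex \<Rightarrow> complex"
  assumes "continuous_on circle f"
  shows "integrable (\<mu> x) f"
proof -
  interpret finite_measure "\<mu> x" by (rule finite_measure_\<mu>)
  obtain K where "\<forall>w\<in>circle. norm (f w) \<le> K"
    using continuous_on_circle_bounded[OF assms] by blast
  then show ?thesis
    by (intro integrable_const_bound[where B=K] AE_I2 borel_measurable_\<mu> assms) auto
qed

lemma \<mu>_E_eq_density: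
  assumes B: "B \<in> circ_sets"
  shows "\<mu> (E B x) = density (\<mu> x) (\<lambda>w. ennreal (indicator B w))"
proof (rule measure_eqI)
  fix A assume "A \<in> sets (\<mu> (E B x))"
  then have A: "A \<in> circ_sets" by simp
  have "emeasure (density (\<mu> x) (\<lambda>w. ennreal (indicator B w))) A
      = (\<integral>\<^sup>+ w. ennreal (indicator B w) * indicator A w \<partial>\<mu> x)"
    using A B by (intro emeasure_density) (simp_all add: borel_measurable_indicator)
  also have "\<dots> = (\<integral>\<^sup>+ w. indicator (A \<inter> B) w \<partial>\<mu> x)"
    by (intro nn_integral_cong) (auto simp: indicator_def)
  also have "\<dots> = emeasure (\<mu> (E B x)) A"
    using A B by (simp add: emeasure_\<mu> circ_sets_Int E_Int)
  finally show "emeasure (\<mu> (E B x)) A = emeasure (density (\<mu> x) (\<lambda>w. ennreal (indicator B w))) A" ..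
qed simp

lemma integral_\<mu>_E:
  fixes f :: "complex \<Rightarrow> complex"
  assumes "B \<in> circ_sets" and "continuous_on circle f"
  shows "integral\<^sup>L (\<mu> (E B x)) f = integral\<^sup>L (\<mu> x) (\<lambda>w. indicator B w *\<^sub>R f w)"
  unfolding \<mu>_E_eq_density[OF assms(1)] using assms
  by (intro integral_density borel_measurable_indicator borel_measurable_\<mu>) auto

lemma spectrally_additive_integral:
  fixes f :: "complex \<Rightarrow> complex"
  assumes f: "continuous_on circle f"
  shows "spectrally_additive E (\<lambda>y. integral\<^sup>L (\<mu> y) f)"
  unfolding spectrally_additive_def
proof (intro ballI allI impI)
  fix B C y z assume B: "B \<in> circ_sets" and C: "C \<in> circ_sets" and "B \<inter> C = {}"
    and y: "E B y = y" and z: "E C z = z"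
  then have yz: "E B (y + z) = y" "E C (y + z) = z" "E (B \<union> C) (y + z) = y + z"
    using E_disjoint_eq_0[of B C z] E_disjoint_eq_0[of C B y]
    by (auto simp: clinear_op_add[OF clinear_op_E] E_Un)
  have "integral\<^sup>L (\<mu> (y + z)) f = integral\<^sup>L (\<mu> (y + z)) (\<lambda>w. indicator (B \<union> C) w *\<^sub>R f w)"
    using integral_\<mu>_E[OF circ_sets_Un[OF B C] f, of "y + z"] yz(3) by simp
  also have "\<dots> = integral\<^sup>L (\<mu> (y + z)) (\<lambda>w. indicator B w *\<^sub>R f w + indicator C w *\<^sub>R f w)"
    using \<open>B \<inter> C = {}\<close> by (intro Bochner_Integration.integral_cong) (auto simp: indicator_def)
  also have "\<dots> = integral\<^sup>L (\<mu> (E B (y + z))) f + integral\<^sup>L (\<mu> (E C (y + z))) f"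
    using B C f by (simp add: integral_\<mu>_E integrable_\<mu> integrable_mult_indicator)
  finally show "integral\<^sup>L (\<mu> (y + z)) f = integral\<^sup>L (\<mu> y) f + integral\<^sup>L (\<mu> z) f"
    by (simp only: yz)
qed

lemma AE_\<mu>:
  assumes "B \<in> circ_sets" and "E B y = y"
  shows "AE w in \<mu> y. w \<in> B"
proof -
  have "(circle - B) \<inter> B = {}" by blast
  then have "E (circle - B) y = 0"
    using assms E_disjoint_eq_0[of "circle - B" B y] by (simp add: circ_sets_Diff)
  then have "emeasure (\<mu> y) (circle - B) = 0"
    using assms by (simp add: emeasure_\<mu> circ_sets_Diff)
  then show ?thesis
    using assms by (subst AE_iff_measurable[where N="circle - B"]) (auto simp: circ_sets_Diff)
qed

lemma integral_\<mu>_estimate: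
  fixes f :: "complex \<Rightarrow> complex"
  assumes "B \<in> circ_sets" and "E B y = y" and f: "continuous_on circle f"
    and est: "\<And>w. w \<in> B \<Longrightarrow> norm (f w - k) \<le> e"
  shows "norm (integral\<^sup>L (\<mu> y) f - k * (norm y)\<^sup>2) \<le> e * (norm y)\<^sup>2"
proof -
  interpret finite_measure "\<mu> y" by (rule finite_measure_\<mu>)
  have "integral\<^sup>L (\<mu> y) f - k * (norm y)\<^sup>2 = integral\<^sup>L (\<mu> y) (\<lambda>w. f w - k)"
    using integrable_\<mu>[OF f] by (simp add: measure_\<mu>_circle scaleR_conv_of_real mult.commute)
  also have "norm \<dots> \<le> integral\<^sup>L (\<mu> y) (\<lambda>w. norm (f w - k))"
    by (rule integral_norm_bound)
  also have "\<dots> \<le> integral\<^sup>L (\<mu> y) (\<lambda>w. e)"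
    using AE_\<mu>[OF assms(1,2)] est integrable_\<mu>[OF f]
    by (intro integral_mono_AE) (auto elim!: eventually_mono)
  also have "\<dots> = e * (norm y)\<^sup>2" by (simp add: measure_\<mu>_circle)
  finally show ?thesis .
qed

lemma eventually_integral_\<mu>_near:
  fixes f :: "complex \<Rightarrow> complex"
  assumes f: "continuous_on circle f" and "e > 0"
  shows "\<forall>\<^sub>F d in at_right 0. \<forall>c y. concentrated E c d y \<longrightarrow>
    norm (integral\<^sup>L (\<mu> y) f - f c * of_real ((norm y)\<^sup>2)) \<le> e * (norm y)\<^sup>2"
proof -
  obtain d1 where "d1 > 0"
    and d1: "\<And>w c. w \<in> circle \<Longrightarrow> c \<in> circle \<Longrightarrow> dist w c < d1 \<Longrightarrow> dist (f w) (f c) < e"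
    using compact_uniformly_continuous[OF f compact_sphere] \<open>e > 0\<close>
    unfolding uniformly_continuous_on_def by metis
  have "\<forall>\<^sub>F d in at_right 0. d < d1"
    using \<open>d1 > 0\<close> by (auto simp: eventually_at_right_field)
  then show ?thesis
  proof eventually_elim
    case (elim d)
    show ?case
    proof (intro allI impI)
      fix c y assume "concentrated E c d y"
      then obtain B where B: "B \<in> circ_sets" "c \<in> B" "B \<subseteq> ball c d" "E B y = y"
        unfolding concentrated_def by blast
      show "norm (integral\<^sup>L (\<mu> y) f - f c * of_real ((norm y)\<^sup>2)) \<le> e * (norm y)\<^sup>2"
      proof (rule integral_\<mu>_estimate[OF B(1,4) f])
        fix w assume "w \<in> B"
        then have "w \<in> circle" "c \<in> circle" "dist w c < d1"
          using B circ_sets_subset[OF B(1)] elim by (auto simp: dist_commute)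
        then show "norm (f w - f c) \<le> e"
          using d1 by (fastforce simp: dist_norm)
      qed
    qed
  qed
qed

lemma spectrally_additive_zero: "spectrally_additive E Q \<Longrightarrow> Q 0 = 0"
  using spectrally_additiveD[of E Q "{}" "{}" 0 0] by simp

lemma spectrally_additive_sum:
  assumes Q: "spectrally_additive E Q"
    and "finite I" and "\<And>i. i \<in> I \<Longrightarrow> P i \<in> circ_sets" and "disjoint_family_on P I"
  shows "Q (\<Sum>i\<in>I. E (P i) x) = (\<Sum>i\<in>I. Q (E (P i) x))"
  using assms(2-)
proof (induction I rule: finite_induct)
  case (insert j I)
  let ?U = "\<Union>i\<in>I. P i"
  have U: "?U \<in> circ_sets" and "P j \<inter> ?U = {}" and "disjoint_family_on P I"
    using insert by (auto simp: circ_sets_UN disjoint_family_on_def)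
  then have "Q (E (P j) x + E ?U x) = Q (E (P j) x) + Q (E ?U x)"
    using insert by (intro spectrally_additiveD[OF Q]) auto
  with insert \<open>disjoint_family_on P I\<close> show ?case
    by (simp add: E_sum)
qed (simp add: spectrally_additive_zero[OF Q])

lemma spectrally_additive_norm_square: "spectrally_additive E (\<lambda>y. (norm y)\<^sup>2)"
  unfolding spectrally_additive_def by (metis cinner_E_disjoint pythagoras)

lemma spectrally_additive_norm_le:
  assumes Q: "spectrally_additive E Q" and "d > 0"
    and d: "\<And>c y. concentrated E c d y \<Longrightarrow> norm (Q y) \<le> e * (norm y)\<^sup>2"
  shows "norm (Q x) \<le> e * (norm x)\<^sup>2"
proof -
  define n where "n = nat \<lceil>2 / d\<rceil> + 1"
  have "n > 0" and "2 / d < real n"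
    unfolding n_def by linarith+
  then have "2 / real n < d"
    using \<open>d > 0\<close> by (simp add: field_simps)
  let ?y = "\<lambda>i. E (grid_cell n i) x"
  have cell: "norm (Q (?y i)) \<le> e * (norm (?y i))\<^sup>2" for i
  proof (cases "grid_cell n i = {}")
    case True
    then show ?thesis using spectrally_additive_zero[OF Q] by simp
  next
    case False
    then obtain c where "c \<in> grid_cell n i" by blast
    then have "grid_cell n i \<subseteq> ball c d"
      using grid_cell_diameter[OF \<open>n > 0\<close>] \<open>2 / real n < d\<close> by (fastforce simp: dist_commute)
    then have "concentrated E c d (?y i)"
      using \<open>c \<in> grid_cell n i\<close> grid_cell_circ_sets[of n i] unfolding concentrated_def
      by (intro bexI[of _ "grid_cell n i"]) simp_all
    then show ?thesis by (rule d)
  qed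
  note grid = finite_grid_index grid_cell_circ_sets disjoint_family_grid_cell
  have x: "x = (\<Sum>i\<in>grid_index n. ?y i)"
    by (simp add: E_sum grid UN_grid_cell)
  have "norm (Q x) = norm (\<Sum>i\<in>grid_index n. Q (?y i))"
    by (subst x, subst spectrally_additive_sum[OF Q]) (simp_all add: grid)
  also have "\<dots> \<le> (\<Sum>i\<in>grid_index n. e * (norm (?y i))\<^sup>2)"
    by (rule order_trans[OF norm_sum sum_mono[OF cell]])
  also have "\<dots> = e * (norm x)\<^sup>2"
    by (subst (2) x, subst spectrally_additive_sum[OF spectrally_additive_norm_square])
      (simp_all add: grid sum_distrib_left)
  finally show ?thesis .
qed

lemma spectrally_additive_eq_0:
  assumes Q: "spectrally_additive E Q"
    and small: "\<And>e. e > 0 \<Longrightarrow>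
      \<forall>\<^sub>F d in at_right 0. \<forall>c y. concentrated E c d y \<longrightarrow> norm (Q y) \<le> e * (norm y)\<^sup>2"
  shows "Q x = 0"
proof -
  have "norm (Q x) \<le> 0 + e" if "e > 0" for e
  proof -
    define e' where "e' = e / ((norm x)\<^sup>2 + 1)"
    have "e' > 0" using that by (simp add: e'_def add_nonneg_pos)
    then obtain d where "d > 0" and d: "\<And>c y. concentrated E c d y \<Longrightarrow> norm (Q y) \<le> e' * (norm y)\<^sup>2"
      using eventually_happens'[OF trivial_limit_at_right_real
          eventually_conj[OF eventually_at_right_less small[OF \<open>e' > 0\<close>]]] by blast
    have "norm (Q x) \<le> e' * (norm x)\<^sup>2"
      by (rule spectrally_additive_norm_le[OF Q \<open>d > 0\<close> d])
    also have "\<dots> = e * ((norm x)\<^sup>2 / ((norm x)\<^sup>2 + 1))" by (simp add: e'_def)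
    also have "\<dots> \<le> e * 1"
      using that by (intro mult_left_mono) (simp_all add: divide_le_eq_1 add_nonneg_pos)
    finally show ?thesis by simp
  qed
  then show ?thesis
    using field_le_epsilon[of "norm (Q x)" 0] by simp
qed

end

section \<open>Local multipliers\<close>

definition spectral_commute :: "(complex set \<Rightarrow> ('a::chilbert \<Rightarrow> 'a)) \<Rightarrow> ('a \<Rightarrow> 'a) \<Rightarrow> bool" where
  "spectral_commute E S \<longleftrightarrow> (\<forall>B\<in>circ_sets. \<forall>y. S (E B y) = E B (S y))"

definition local_multiplier ::
  "(complex set \<Rightarrow> ('a::chilbert \<Rightarrow> 'a)) \<Rightarrow> ('a \<Rightarrow> 'a) \<Rightarrow> (complex \<Rightarrow> complex) \<Rightarrow> bool" where
  "local_multiplier E S s \<longleftrightarrow> bounded_op S \<and> spectral_commute E S \<and> continuous_on circle s \<and>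
     (\<forall>e>0. \<forall>\<^sub>F d in at_right 0. \<forall>c y. concentrated E c d y \<longrightarrow> norm (S y - cscale (s c) y) \<le> e * norm y)"

lemma local_multiplierI:
  assumes "bounded_op S" and "spectral_commute E S" and "continuous_on circle s"
    and "\<And>e. e > 0 \<Longrightarrow>
      \<forall>\<^sub>F d in at_right 0. \<forall>c y. concentrated E c d y \<longrightarrow> norm (S y - cscale (s c) y) \<le> e * norm y"
  shows "local_multiplier E S s"
  using assms unfolding local_multiplier_def by blast

lemma local_multiplierD:
  assumes "local_multiplier E S s"
  shows "bounded_op S" and "spectral_commute E S" and "continuous_on circle s"
    and "e > 0 \<Longrightarrow>
      \<forall>\<^sub>F d in at_right 0. \<forall>c y. concentrated E c d y \<longrightarrow> norm (S y - cscale (s c) y) \<le> e * norm y"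
  using assms unfolding local_multiplier_def by blast+

lemma local_multiplier_cong:
  assumes S: "local_multiplier E S s" and eq: "\<And>c. c \<in> circle \<Longrightarrow> s c = s' c"
  shows "local_multiplier E S s'"
proof (rule local_multiplierI)
  show "continuous_on circle s'"
    using local_multiplierD(3)[OF S] eq by (rule continuous_on_eq)
  show "\<forall>\<^sub>F d in at_right 0. \<forall>c y. concentrated E c d y \<longrightarrow> norm (S y - cscale (s' c) y) \<le> e * norm y"
    if "e > 0" for e
    using local_multiplierD(4)[OF S that] by eventually_elim (metis concentrated_in_circle eq)
qed (use local_multiplierD[OF S] in auto)

lemma spectral_commute_ident: "spectral_commute E (\<lambda>x. x)"
  by (simp add: spectral_commute_def)

lemma spectral_commute_compose:
  "spectral_commute E S \<Longrightarrow> spectral_commute E T \<Longrightarrow> spectral_commute E (\<lambda>x. S (T x))"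
  by (simp add: spectral_commute_def)

lemma spectral_commute_inverse:
  "spectral_commute E T \<Longrightarrow> (\<And>w. R (T w) = w) \<Longrightarrow> (\<And>w. T (R w) = w) \<Longrightarrow> spectral_commute E R"
  unfolding spectral_commute_def by metis

context circle_spectral_measure
begin

lemma spectral_commute_sub:
  "spectral_commute E S \<Longrightarrow> spectral_commute E T \<Longrightarrow> spectral_commute E (\<lambda>x. S x - T x)"
  by (simp add: spectral_commute_def clinear_op_diff[OF clinear_op_E])

lemma spectral_commute_const_cscale:
  "spectral_commute E S \<Longrightarrow> spectral_commute E (\<lambda>x. cscale a (S x))"
  by (simp add: spectral_commute_def clinear_op_cscale[OF clinear_op_E])

lemma spectrally_additive_quadratic_form:
  assumes A: "clinear_op A" and "spectral_commute E A"
  shows "spectrally_additive E (\<lambda>y. cinner (A y) y)"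
  unfolding spectrally_additive_def
proof (intro ballI allI impI)
  fix B C y z assume B: "B \<in> circ_sets" and C: "C \<in> circ_sets" and "B \<inter> C = {}"
    and y: "E B y = y" and z: "E C z = z"
  moreover have "E B (A y) = A y" "E C (A z) = A z"
    using \<open>spectral_commute E A\<close> B C y z unfolding spectral_commute_def by metis+
  ultimately have "cinner (A y) z = 0" "cinner (A z) y = 0"
    using cinner_E_disjoint[OF B C, of "A y" z] cinner_E_disjoint[OF C B, of "A z" y]
    by (simp_all add: Int_commute)
  then show "cinner (A (y + z)) (y + z) = cinner (A y) y + cinner (A z) z"
    by (simp add: clinear_op_add[OF A] cinner_simps)
qed

lemma quadratic_form_cross_eq_0:
  assumes A: "clinear_op A" and Q: "spectrally_additive E (\<lambda>y. cinner (A y) y)"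
    and B: "B \<in> circ_sets" and C: "C \<in> circ_sets" and "B \<inter> C = {}"
    and "E B y = y" and "E C z = z"
  shows "cinner (A y) z = 0"
proof -
  have "E C (cscale a z) = cscale a z" for a
    using \<open>E C z = z\<close> clinear_op_cscale[OF clinear_op_E[OF C]] by simp
  then have "cinner (A (y + cscale a z)) (y + cscale a z)
      = cinner (A y) y + cinner (A (cscale a z)) (cscale a z)" for a
    by (rule spectrally_additiveD[OF Q B C \<open>B \<inter> C = {}\<close> \<open>E B y = y\<close>])
  then have "cnj a * cinner (A y) z + a * cinner (A z) y = 0" for a
    by (simp add: clinear_op_add[OF A] clinear_op_cscale[OF A] cinner_simps algebra_simps)
  from this[of 1] this[of \<i>] show ?thesis
    by (simp add: algebra_simps)
qed

lemma spectral_commute_if_additive_quadratic_form: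
  assumes A: "clinear_op A" and Q: "spectrally_additive E (\<lambda>y. cinner (A y) y)"
  shows "spectral_commute E A"
  unfolding spectral_commute_def
proof (intro ballI allI)
  fix B y assume B: "B \<in> circ_sets"
  let ?B' = "circle - B"
  have B': "?B' \<in> circ_sets" and "B \<inter> ?B' = {}" "?B' \<inter> B = {}"
    using B by (auto simp: circ_sets_Diff)
  have off: "E C (A (E D x)) = 0"
    if C: "C \<in> circ_sets" and D: "D \<in> circ_sets" and "D \<inter> C = {}" for C D x
  proof (rule cinner_eq_0_imp_eq_0)
    fix w
    have "cinner (E C (A (E D x))) w = cinner (A (E D x)) (E C w)"
      by (rule cinner_E_commute[OF C])
    also have "\<dots> = 0"
      by (rule quadratic_form_cross_eq_0[OF A Q D C \<open>D \<inter> C = {}\<close>]) (simp_all add: C D)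
    finally show "cinner (E C (A (E D x))) w = 0" .
  qed
  have "A (E B y) = E B (A (E B y)) + E ?B' (A (E B y))"
    by (simp add: E_compl[OF B])
  also have "\<dots> = E B (A (E B y)) + E B (A (E ?B' y))"
    using off[OF B' B] off[OF B B'] \<open>B \<inter> ?B' = {}\<close> \<open>?B' \<inter> B = {}\<close> by simp
  also have "\<dots> = E B (A (E B y + E ?B' y))"
    by (simp only: clinear_op_add[OF A] clinear_op_add[OF clinear_op_E[OF B]])
  also have "E B y + E ?B' y = y"
    by (simp add: E_compl[OF B])
  finally show "A (E B y) = E B (A y)" .
qed

lemma local_multiplier_ident: "local_multiplier E (\<lambda>x. x) (\<lambda>c. 1)"
  by (rule local_multiplierI) (simp_all add: bounded_op_ident spectral_commute_ident cscale_one)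

lemma local_multiplier_sub:
  assumes S: "local_multiplier E S s" and T: "local_multiplier E T t"
  shows "local_multiplier E (\<lambda>x. S x - T x) (\<lambda>c. s c - t c)"
proof (rule local_multiplierI)
  show "bounded_op (\<lambda>x. S x - T x)" "spectral_commute E (\<lambda>x. S x - T x)" "continuous_on circle (\<lambda>c. s c - t c)"
    using local_multiplierD[OF S] local_multiplierD[OF T]
    by (auto intro: bounded_op_sub spectral_commute_sub continuous_on_diff)
  fix e :: real assume "e > 0"
  then have "e / 2 > 0" by simp
  show "\<forall>\<^sub>F d in at_right 0. \<forall>c y. concentrated E c d y \<longrightarrow>
      norm (S y - T y - cscale (s c - t c) y) \<le> e * norm y"
    using local_multiplierD(4)[OF S \<open>e / 2 > 0\<close>] local_multiplierD(4)[OF T \<open>e / 2 > 0\<close>]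
  proof eventually_elim
    case (elim d)
    show ?case
    proof (intro allI impI)
      fix c y assume "concentrated E c d y"
      have "S y - T y - cscale (s c - t c) y = (S y - cscale (s c) y) - (T y - cscale (t c) y)"
        by (simp add: cscale_diff_left)
      also have "norm \<dots> \<le> e / 2 * norm y + e / 2 * norm y"
        using elim \<open>concentrated E c d y\<close> by (meson add_mono norm_triangle_ineq4 order_trans)
      finally show "norm (S y - T y - cscale (s c - t c) y) \<le> e * norm y" by simp
    qed
  qed
qed

lemma local_multiplier_const_cscale:
  assumes S: "local_multiplier E S s"
  shows "local_multiplier E (\<lambda>x. cscale a (S x)) (\<lambda>c. a * s c)"
proof (rule local_multiplierI)
  show "bounded_op (\<lambda>x. cscale a (S x))" "spectral_commute E (\<lambda>x. cscale a (S x))"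
    "continuous_on circle (\<lambda>c. a * s c)"
    using local_multiplierD[OF S]
    by (auto intro: bounded_op_const_cscale spectral_commute_const_cscale continuous_on_mult_left)
  fix e :: real assume "e > 0"
  then have "e / (cmod a + 1) > 0" by (simp add: add_nonneg_pos)
  show "\<forall>\<^sub>F d in at_right 0. \<forall>c y. concentrated E c d y \<longrightarrow>
      norm (cscale a (S y) - cscale (a * s c) y) \<le> e * norm y"
    using local_multiplierD(4)[OF S \<open>e / (cmod a + 1) > 0\<close>]
  proof eventually_elim
    case (elim d)
    show ?case
    proof (intro allI impI)
      fix c y assume "concentrated E c d y"
      have "cscale a (S y) - cscale (a * s c) y = cscale a (S y - cscale (s c) y)"
        by (simp add: cscale_diff_right cscale_cscale)
      then have "norm (cscale a (S y) - cscale (a * s c) y) = cmod a * norm (S y - cscale (s c) y)"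
        by (simp add: norm_cscale)
      also have "\<dots> \<le> cmod a * (e / (cmod a + 1) * norm y)"
        using elim \<open>concentrated E c d y\<close> by (intro mult_left_mono) auto
      also have "\<dots> = cmod a / (cmod a + 1) * (e * norm y)" by simp
      also have "\<dots> \<le> 1 * (e * norm y)"
        using \<open>e > 0\<close> by (intro mult_right_mono) (simp_all add: divide_le_eq_1 add_nonneg_pos)
      finally show "norm (cscale a (S y) - cscale (a * s c) y) \<le> e * norm y" by simp
    qed
  qed
qed

lemma local_multiplier_compose:
  assumes S: "local_multiplier E S s" and T: "local_multiplier E T t"
  shows "local_multiplier E (\<lambda>x. S (T x)) (\<lambda>c. s c * t c)"
proof (rule local_multiplierI)
  show "bounded_op (\<lambda>x. S (T x))" "spectral_commute E (\<lambda>x. S (T x))"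
    "continuous_on circle (\<lambda>c. s c * t c)"
    using local_multiplierD[OF S] local_multiplierD[OF T]
    by (auto intro: bounded_op_compose spectral_commute_compose continuous_on_mult)
  have "clinear_op S" using local_multiplierD(1)[OF S] by (simp add: bounded_op_def)
  obtain K where "K > 0" and K: "\<And>x. norm (S x) \<le> K * norm x"
    using bounded_op_pos_bound[OF local_multiplierD(1)[OF S]] by blast
  obtain N where "N > 0" and N: "\<And>c. c \<in> circle \<Longrightarrow> cmod (t c) \<le> N"
    using continuous_on_circle_bounded[OF local_multiplierD(3)[OF T]] by blast
  fix e :: real assume "e > 0"
  then have "e / (2 * K) > 0" "e / (2 * N) > 0" using \<open>K > 0\<close> \<open>N > 0\<close> by simp_all
  show "\<forall>\<^sub>F d in at_right 0. \<forall>c y. concentrated E c d y \<longrightarrow>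
      norm (S (T y) - cscale (s c * t c) y) \<le> e * norm y"
    using local_multiplierD(4)[OF T \<open>e / (2 * K) > 0\<close>] local_multiplierD(4)[OF S \<open>e / (2 * N) > 0\<close>]
  proof eventually_elim
    case (elim d)
    show ?case
    proof (intro allI impI)
      fix c y assume y: "concentrated E c d y"
      have "norm (S (T y) - cscale (s c * t c) y)
          \<le> K * norm (T y - cscale (t c) y) + cmod (t c) * norm (S y - cscale (s c) y)"
        by (rule norm_compose_sub_cscale_le[OF \<open>clinear_op S\<close> K])
      also have "\<dots> \<le> K * (e / (2 * K) * norm y) + N * (e / (2 * N) * norm y)"
        using elim y N[OF concentrated_in_circle[OF y]] \<open>K > 0\<close> \<open>N > 0\<close>
        by (intro add_mono mult_mono) auto
      also have "\<dots> = e * norm y" using \<open>K > 0\<close> \<open>N > 0\<close> by simp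
      finally show "norm (S (T y) - cscale (s c * t c) y) \<le> e * norm y" .
    qed
  qed
qed

lemma local_multiplier_inverse:
  assumes T: "local_multiplier E T t" and R: "bounded_op R"
    and RT: "\<And>w. R (T w) = w" and TR: "\<And>w. T (R w) = w"
    and "m > 0" and tm: "\<And>c. c \<in> circle \<Longrightarrow> m \<le> cmod (t c)"
  shows "local_multiplier E R (\<lambda>c. 1 / t c)"
proof (rule local_multiplierI)
  have t0: "t c \<noteq> 0" if "c \<in> circle" for c using tm[OF that] \<open>m > 0\<close> by auto
  then show "continuous_on circle (\<lambda>c. 1 / t c)"
    using local_multiplierD(3)[OF T] by (intro continuous_on_divide continuous_on_const) auto
  show "spectral_commute E R"
    using local_multiplierD(2)[OF T] RT TR by (rule spectral_commute_inverse)
  have "clinear_op R" using R by (simp add: bounded_op_def)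
  obtain K where "K > 0" and K: "\<And>x. norm (R x) \<le> K * norm x"
    using bounded_op_pos_bound[OF R] by blast
  fix e :: real assume "e > 0"
  then have "e * m / K > 0" using \<open>K > 0\<close> \<open>m > 0\<close> by simp
  show "\<forall>\<^sub>F d in at_right 0. \<forall>c y. concentrated E c d y \<longrightarrow>
      norm (R y - cscale (1 / t c) y) \<le> e * norm y"
    using local_multiplierD(4)[OF T \<open>e * m / K > 0\<close>]
  proof eventually_elim
    case (elim d)
    show ?case
    proof (intro allI impI)
      fix c y assume y: "concentrated E c d y"
      then have c: "c \<in> circle" by (rule concentrated_in_circle)
      have "norm (R y - cscale (1 / t c) y) \<le> K / cmod (t c) * norm (T y - cscale (t c) y)"
        by (rule norm_inverse_sub_cscale_le[OF \<open>clinear_op R\<close> K RT t0[OF c]])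
      also have "\<dots> \<le> K / m * (e * m / K * norm y)"
        using elim y tm[OF c] order_less_le_trans[OF \<open>m > 0\<close> tm[OF c]] \<open>K > 0\<close> \<open>m > 0\<close>
        by (intro mult_mono divide_left_mono) auto
      also have "\<dots> = e * norm y" using \<open>K > 0\<close> \<open>m > 0\<close> by simp
      finally show "norm (R y - cscale (1 / t c) y) \<le> e * norm y" .
    qed
  qed
qed (fact R)

lemma spectrally_additive_norm_square_op:
  assumes S: "clinear_op S" and "spectral_commute E S"
  shows "spectrally_additive E (\<lambda>y. (norm (S y))\<^sup>2)"
  unfolding spectrally_additive_def
proof (intro ballI allI impI)
  fix B C y z assume B: "B \<in> circ_sets" and C: "C \<in> circ_sets" and "B \<inter> C = {}"
    and "E B y = y" and "E C z = z"
  then have "E B (S y) = S y" "E C (S z) = S z"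
    using \<open>spectral_commute E S\<close> unfolding spectral_commute_def by metis+
  then have "cinner (S y) (S z) = 0"
    using cinner_E_disjoint[OF B C \<open>B \<inter> C = {}\<close>, of "S y" "S z"] by simp
  then show "(norm (S (y + z)))\<^sup>2 = (norm (S y))\<^sup>2 + (norm (S z))\<^sup>2"
    by (simp add: clinear_op_add[OF S] pythagoras)
qed

lemma local_multiplier_isometry:
  assumes S: "local_multiplier E S s" and unimodular: "\<And>c. c \<in> circle \<Longrightarrow> cmod (s c) = 1"
  shows "norm (S x) = norm x"
proof -
  have "clinear_op S" using local_multiplierD(1)[OF S] by (simp add: bounded_op_def)
  have "(norm (S x))\<^sup>2 - (norm x)\<^sup>2 = 0"
  proof (rule spectrally_additive_eq_0)
    show "spectrally_additive E (\<lambda>y. (norm (S y))\<^sup>2 - (norm y)\<^sup>2)"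
      using \<open>clinear_op S\<close> local_multiplierD(2)[OF S]
      by (intro spectrally_additive_diff spectrally_additive_norm_square_op spectrally_additive_norm_square)
    fix e :: real assume "e > 0"
    define a where "a = min 1 (e / 3)"
    have "a > 0" "a \<le> 1" "3 * a \<le> e" using \<open>e > 0\<close> by (auto simp: a_def)
    show "\<forall>\<^sub>F d in at_right 0. \<forall>c y. concentrated E c d y \<longrightarrow>
        norm ((norm (S y))\<^sup>2 - (norm y)\<^sup>2) \<le> e * (norm y)\<^sup>2"
      using local_multiplierD(4)[OF S \<open>a > 0\<close>]
    proof eventually_elim
      case (elim d)
      show ?case
      proof (intro allI impI)
        fix c y assume y: "concentrated E c d y"
        have "\<bar>norm (S y) - norm y\<bar> \<le> norm (S y - cscale (s c) y)"
          using norm_triangle_ineq3[of "S y" "cscale (s c) y"]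
          by (simp add: norm_cscale unimodular[OF concentrated_in_circle[OF y]])
        also have "\<dots> \<le> a * norm y" using elim y by blast
        finally have "\<bar>(norm (S y))\<^sup>2 - (norm y)\<^sup>2\<bar> \<le> 3 * a * (norm y)\<^sup>2"
          using \<open>a \<le> 1\<close> by (intro abs_square_diff_le) auto
        also have "\<dots> \<le> e * (norm y)\<^sup>2"
          using \<open>3 * a \<le> e\<close> by (intro mult_right_mono) auto
        finally show "norm ((norm (S y))\<^sup>2 - (norm y)\<^sup>2) \<le> e * (norm y)\<^sup>2" by simp
      qed
    qed
  qed
  then show ?thesis by simp
qed

lemma local_multiplier_spectral_integral:
  assumes A: "local_multiplier E A f"
  shows "spectral_integral_is E f A"
  unfolding spectral_integral_is_def
proof (intro conjI allI)
  show "bounded_op A" by (rule local_multiplierD(1)[OF A])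
  then have "clinear_op A" by (simp add: bounded_op_def)
  have f: "continuous_on circle f" by (rule local_multiplierD(3)[OF A])
  fix x
  have "cinner (A x) x - integral\<^sup>L (\<mu> x) f = 0"
  proof (rule spectrally_additive_eq_0)
    show "spectrally_additive E (\<lambda>y. cinner (A y) y - integral\<^sup>L (\<mu> y) f)"
      using \<open>clinear_op A\<close> local_multiplierD(2)[OF A]
      by (intro spectrally_additive_diff spectrally_additive_quadratic_form spectrally_additive_integral f)
    fix e :: real assume "e > 0"
    then have "e / 2 > 0" by simp
    show "\<forall>\<^sub>F d in at_right 0. \<forall>c y. concentrated E c d y \<longrightarrow>
        norm (cinner (A y) y - integral\<^sup>L (\<mu> y) f) \<le> e * (norm y)\<^sup>2"
      using local_multiplierD(4)[OF A \<open>e / 2 > 0\<close>] eventually_integral_\<mu>_near[OF f \<open>e / 2 > 0\<close>]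
    proof eventually_elim
      case (elim d)
      show ?case
      proof (intro allI impI)
        fix c y assume y: "concentrated E c d y"
        let ?q = "f c * of_real ((norm y)\<^sup>2)"
        have "norm (cinner (A y) y - ?q) \<le> norm (A y - cscale (f c) y) * norm y"
          by (rule norm_cinner_sub_le)
        also have "\<dots> \<le> e / 2 * norm y * norm y"
          using elim y by (intro mult_right_mono) auto
        finally have "norm (cinner (A y) y - ?q) \<le> e / 2 * (norm y)\<^sup>2"
          by (simp add: power2_eq_square mult.assoc)
        moreover have "norm (integral\<^sup>L (\<mu> y) f - ?q) \<le> e / 2 * (norm y)\<^sup>2"
          using elim y by blast
        ultimately show "norm (cinner (A y) y - integral\<^sup>L (\<mu> y) f) \<le> e * (norm y)\<^sup>2"
          using norm_triangle_ineq4[of "cinner (A y) y - ?q" "integral\<^sup>L (\<mu> y) f - ?q"] by simp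
      qed
    qed
  qed
  then show "cinner (A x) x = integral\<^sup>L (\<mu> x) f" by simp
qed

lemma local_multiplier_moebius_op:
  assumes T: "local_multiplier E T t" and contraction: "\<And>w. norm (T w) \<le> norm w"
    and t: "\<And>c. c \<in> circle \<Longrightarrow> cmod (t c) \<le> 1" and a: "cmod a < 1"
  shows "local_multiplier E (moebius_op b a T) (\<lambda>c. (b * t c - a) / (1 - a * t c))"
proof -
  have lin: "clinear_op T" using local_multiplierD(1)[OF T] by (simp add: bounded_op_def)
  have I_minus_aT: "local_multiplier E (\<lambda>x. x - cscale a (T x)) (\<lambda>c. 1 - a * t c)"
    by (intro local_multiplier_sub local_multiplier_ident local_multiplier_const_cscale T)
  have bound: "1 - cmod a \<le> cmod (1 - a * t c)" if "c \<in> circle" for c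
  proof -
    have "cmod a * cmod (t c) \<le> cmod a" using t[OF that] by (simp add: mult_left_le)
    then show ?thesis using norm_triangle_ineq2[of 1 "a * t c"] by (simp add: norm_mult)
  qed
  have N: "local_multiplier E (neumann_series T a) (\<lambda>c. 1 / (1 - a * t c))"
    by (rule local_multiplier_inverse[OF I_minus_aT bounded_op_neumann_series[OF lin contraction a]
          neumann_series_left_inverse[OF lin contraction a]
          neumann_series_right_inverse[OF lin contraction a] _ bound])
      (use a in simp_all)
  have "local_multiplier E (\<lambda>x. cscale b (T x) - cscale a x) (\<lambda>c. b * t c - a * 1)"
    by (intro local_multiplier_sub local_multiplier_ident local_multiplier_const_cscale T)
  from local_multiplier_compose[OF this N] show ?thesis
    by (simp add: moebius_op_def comp_def)
qed

end

section \<open>The unitary U and the operators lambda_U\<close>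

lemma G_delta_norm_less:
  assumes "0 < \<delta>" and "\<delta> < 1" and "l \<in> G_delta \<delta>"
  shows "cmod l < 1 + \<delta>"
proof -
  have "(1 - \<delta>)\<^sup>2 \<le> (1 + \<delta>)\<^sup>2" "0 < (1 - \<delta>)\<^sup>2" "0 < (1 + \<delta>)\<^sup>2"
    using assms(1,2) by (simp_all add: power_mono)
  then have "(Im l)\<^sup>2 / (1 + \<delta>)\<^sup>2 \<le> (Im l)\<^sup>2 / (1 - \<delta>)\<^sup>2"
    by (intro divide_left_mono) auto
  then have "((Re l)\<^sup>2 + (Im l)\<^sup>2) / (1 + \<delta>)\<^sup>2 < 1"
    using assms(3) by (simp add: G_delta_def add_divide_distrib)
  then have "(cmod l)\<^sup>2 < (1 + \<delta>)\<^sup>2"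
    using assms(1) by (simp add: cmod_power2 divide_less_eq)
  then show ?thesis by (rule power2_less_imp_less) (use assms(1) in simp)
qed

lemma Psi_eq: "Psi \<delta> \<omega> l = (of_real \<delta> * \<omega> - l / 2) / (1 - l / 2 * \<omega>)"
proof -
  have "(of_real \<delta> * \<omega> - l / 2) / (1 - l / 2 * \<omega>)
      = ((of_real \<delta> * \<omega> - l / 2) * 2) / ((1 - l / 2 * \<omega>) * 2)"
    by (rule mult_divide_mult_cancel_right[symmetric]) simp
  then show ?thesis by (simp add: Psi_def algebra_simps)
qed

locale unitary_spectral = circle_spectral_measure E for E :: "complex set \<Rightarrow> 'a::chilbert \<Rightarrow> 'a" +
  fixes U :: "'a \<Rightarrow> 'a"
  assumes unitary: "unitary_op U"
    and adj_spectral_integral: "spectral_integral_is E (\<lambda>\<omega>. \<omega>) (adj U)"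
begin

lemma adj_U [simp]: "adj U (U x) = x" and U_adj [simp]: "U (adj U x) = x"
  using unitary unfolding unitary_op_def by (metis comp_apply id_apply)+

lemma bounded_op_adj: "bounded_op (adj U)"
  using adj_spectral_integral by (simp add: spectral_integral_is_def)

lemma clinear_op_adj: "clinear_op (adj U)"
  using bounded_op_adj by (simp add: bounded_op_def)

lemma cinner_adj_self: "cinner (adj U y) y = integral\<^sup>L (\<mu> y) (\<lambda>\<omega>. \<omega>)"
  using adj_spectral_integral by (simp add: spectral_integral_is_def)

lemma spectral_commute_adj: "spectral_commute E (adj U)"
  using spectral_commute_if_additive_quadratic_form[OF clinear_op_adj]
    spectrally_additive_integral[OF continuous_on_id] by (simp add: cinner_adj_self)

(* On the range of E B the quadratic form of adj U - c is the integral of w - c, of modulus at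
   most d |y|^2, and the numerical radius bounds the norm by twice that. *)
lemma norm_adj_sub_le:
  assumes "concentrated E c d y"
  shows "norm (adj U y - cscale c y) \<le> 2 * d * norm y"
proof -
  obtain B where B: "B \<in> circ_sets" "c \<in> B" "B \<subseteq> ball c d" "E B y = y"
    using assms unfolding concentrated_def by blast
  then have "c \<in> ball c d" by blast
  then have "0 \<le> d" by simp
  show ?thesis
  proof (rule norm_le_numerical_radius[where P="\<lambda>y. E B y = y"])
    show "clinear_op (\<lambda>y. adj U y - cscale c y)"
      by (intro clinear_op_sub clinear_op_adj clinear_op_const_cscale clinear_op_ident)
    show "E B (y + cscale a z) = y + cscale a z" if "E B y = y" "E B z = z" for y z a
      using that clinear_op_E[OF B(1)] by (simp add: clinear_op_add clinear_op_cscale)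
    show "cmod (cinner (adj U y - cscale c y) y) \<le> d * (norm y)\<^sup>2" if "E B y = y" for y
    proof -
      have "cinner (adj U y - cscale c y) y = integral\<^sup>L (\<mu> y) (\<lambda>\<omega>. \<omega>) - c * of_real ((norm y)\<^sup>2)"
        by (simp add: cinner_simps cinner_adj_self cinner_self_norm)
      also have "cmod \<dots> \<le> d * (norm y)\<^sup>2"
        using B that by (intro integral_\<mu>_estimate[OF B(1)])
          (auto simp: dist_norm norm_minus_commute)
      finally show ?thesis .
    qed
    show "E B (adj U y - cscale c y) = adj U y - cscale c y" if "E B y = y" for y
    proof -
      have "E B (adj U y) = adj U y"
        using spectral_commute_adj B(1) that unfolding spectral_commute_def by metis
      with that show ?thesis
        using clinear_op_E[OF B(1)] by (simp add: clinear_op_diff clinear_op_cscale)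
    qed
  qed (use B \<open>0 \<le> d\<close> in auto)
qed

lemma local_multiplier_adj: "local_multiplier E (adj U) (\<lambda>c. c)"
proof (rule local_multiplierI)
  show "\<forall>\<^sub>F d in at_right 0. \<forall>c y. concentrated E c d y \<longrightarrow> norm (adj U y - cscale c y) \<le> e * norm y"
    if "e > 0" for e
  proof -
    have "\<forall>\<^sub>F d in at_right 0. 2 * d < e"
      using that by (auto simp: eventually_at_right_field intro: exI[of _ "e / 2"])
    then show ?thesis
    proof eventually_elim
      case (elim d)
      then show ?case
        using norm_adj_sub_le by (meson mult_right_mono norm_ge_zero order_trans less_imp_le)
    qed
  qed
qed (simp_all add: bounded_op_adj spectral_commute_adj)

lemma norm_adj [simp]: "norm (adj U x) = norm x"
  using local_multiplier_isometry[OF local_multiplier_adj] by simp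

lemma norm_U [simp]: "norm (U x) = norm x"
  using norm_adj[of "U x"] by simp

(* adj is defined by THE, and without a Riesz representation theorem the adjoint of U is not
   known to exist, so unitary_op only says that adj U is a two-sided inverse of U. That it is the
   Hilbert adjoint follows from its spectral representation, which makes it an isometry. *)
lemma is_adjoint_adj: "is_adjoint (adj U) U"
  unfolding is_adjoint_def
proof (intro allI)
  fix x y
  have "cinner (adj U x) (adj U (U y)) = cinner x (U y)"
    by (rule cinner_isometry[OF clinear_op_adj norm_adj])
  then show "cinner (adj U x) y = cinner x (U y)" by simp
qed

lemma local_multiplier_U: "local_multiplier E U cnj"
proof (rule local_multiplier_cong)
  show "local_multiplier E U (\<lambda>c. 1 / c)"
    using unitary
    by (intro local_multiplier_inverse[OF local_multiplier_adj, where m=1]) (auto simp: unitary_op_def)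
  show "1 / c = cnj c" if "c \<in> circle" for c
    using that complex_norm_square[of c] by (simp add: divide_simps mult.commute)
qed

lemma op_lambda_U_eq_moebius_op:
  "cmod l < 2 \<Longrightarrow> op_lambda_U \<delta> l U = moebius_op (of_real \<delta>) (l / 2) (adj U)"
  unfolding op_lambda_U_def
  by (rule moebius_op_eq_opinv[OF clinear_op_adj]) (simp_all add: norm_divide)

lemma local_multiplier_op_lambda_U:
  "cmod l < 2 \<Longrightarrow> local_multiplier E (op_lambda_U \<delta> l U) (\<lambda>\<omega>. Psi \<delta> \<omega> l)"
  using local_multiplier_moebius_op[OF local_multiplier_adj, of "l / 2" "of_real \<delta>"]
  by (simp add: op_lambda_U_eq_moebius_op Psi_eq norm_divide)

lemma adj_op_lambda_U:
  assumes "cmod m < 2"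
  shows "adj (op_lambda_U \<delta> m U) = moebius_op (of_real \<delta>) (cnj (m / 2)) U"
proof -
  have "clinear_op U" using unitary by (simp add: unitary_op_def bounded_op_def)
  with assms show ?thesis
    using is_adjoint_moebius_op[OF is_adjoint_adj clinear_op_adj _ \<open>clinear_op U\<close>, of "m / 2" "of_real \<delta>"]
    by (simp add: op_lambda_U_eq_moebius_op adj_eqI norm_divide)
qed

lemma local_multiplier_adj_op_lambda_U:
  "cmod m < 2 \<Longrightarrow> local_multiplier E (adj (op_lambda_U \<delta> m U)) (\<lambda>\<omega>. cnj (Psi \<delta> \<omega> m))"
  using local_multiplier_moebius_op[OF local_multiplier_U, of "cnj (m / 2)" "of_real \<delta>"]
  by (simp add: adj_op_lambda_U Psi_eq norm_divide)

end

theorem lemma4p2: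
  fixes \<delta> :: real and U :: "'a::chilbert \<Rightarrow> 'a"
    and E :: "complex set \<Rightarrow> ('a \<Rightarrow> 'a)" and l m :: complex
  assumes "0 < \<delta>" and "\<delta> < 1"
    and "unitary_op U"
    and "spectral_measure E"
    and "spectral_integral_is E (\<lambda>\<omega>. \<omega>) (adj U)"
    and "l \<in> G_delta \<delta>" and "m \<in> G_delta \<delta>"
  shows "spectral_integral_is E
           (\<lambda>\<omega>. 1 - cnj (Psi \<delta> \<omega> m) * Psi \<delta> \<omega> l)
           (\<lambda>x. x - adj (op_lambda_U \<delta> m U) (op_lambda_U \<delta> l U x))"
proof -
  interpret unitary_spectral E U
    using assms(3-5) by unfold_locales
  have "cmod l < 2" "cmod m < 2"
    using G_delta_norm_less[OF assms(1,2)] assms(2,6,7) by fastforce+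
  then have "local_multiplier E (op_lambda_U \<delta> l U) (\<lambda>\<omega>. Psi \<delta> \<omega> l)"
    and "local_multiplier E (adj (op_lambda_U \<delta> m U)) (\<lambda>\<omega>. cnj (Psi \<delta> \<omega> m))"
    by (simp_all add: local_multiplier_op_lambda_U local_multiplier_adj_op_lambda_U)
  then have "local_multiplier E (\<lambda>x. x - adj (op_lambda_U \<delta> m U) (op_lambda_U \<delta> l U x))
      (\<lambda>\<omega>. 1 - cnj (Psi \<delta> \<omega> m) * Psi \<delta> \<omega> l)"
    by (intro local_multiplier_sub local_multiplier_ident local_multiplier_compose)
  then show ?thesis by (rule local_multiplier_spectral_integral)
qed

end
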